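(* Let $r,s,t$ be nonzero reals and $\lambda=(\lambda_k)_{k\ge0}$ a strictly increasing sequence of positive reals with $\lambda_k\to\infty$. Let $D=(d_{nk})$ be the inverse of the lower triangular matrix $B(r,s,t)$. For $x\in\omega$ put $\widehat W_k(x)=\frac{1}{\lambda_k}\sum_{j=0}^k(\lambda_j-\lambda_{j-1})(rx_j+sx_{j-1}+tx_{j-2})$ and $\alpha_k(\lambda)=\widehat W_k(x)$. For each fixed $k\in\mathbb{N}$ define $b^{(k)}(\lambda)=(b^{(k)}_n(\lambda))_{n\in\mathbb{N}}$ by $$b_n^{(k)}(\lambda)=\begin{cases}\dfrac{d_{nk}\lambda_k}{\lambda_k-\lambda_{k-1}}-\dfrac{d_{n,k+1}\lambda_k}{\lambda_{k+1}-\lambda_k},& n>k,\\[2mm] \dfrac{1}{r}\dfrac{\lambda_k}{\lambda_k-\lambda_{k-1}},& n=k,\\[2mm] 0,& n<k.\end{cases}$$ Then: (i) $(b^{(k)}(\lambda))_{k\in\mathbb{N}}$ is a Schauder basis of $c_0^\lambda(\widehat B)$, and every $x\in c_0^\lambda(\widehat B)$ has the unique representation $x=\sum_k\alpha_k(\lambda)b^{(k)}(\lambda)$; (ii) for $1\le p<\infty$, $(b^{(k)}(\lambda))_{k\in\mathbb{N}}$ is a Schauder basis of $\ell_p^\lambda(\widehat B)$, and every $x\in\ell_p^\lambda(\widehat B)$ has the unique representation $x=\sum_k\alpha_k(\lambda)b^{(k)}(\lambda)$; (iii) with $b=(b_k)$, $b_k=\sum_{j=0}^k d_{kj}$, the sequence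 $\{b,b^{(0)}(\lambda),b^{(1)}(\lambda),\dots\}$ is a Schauder basis of $c^\lambda(\widehat B)$, and every $x\in c^\lambda(\widehat B)$ has the unique representation $x=lb+\sum_k[\alpha_k(\lambda)-l]b^{(k)}(\lambda)$, where $l=\lim_{k\to\infty}\widehat W_k(x)$.
   Context: $\omega$: all complex sequences indexed by $\mathbb{N}=\{0,1,\dots\}$. Convention: terms with negative subscript are $0$. $B(r,s,t)=(b_{nk})$ is the lower triangular matrix with $b_{nn}=r$, $b_{n,n-1}=s$, $b_{n,n-2}=t$ and all other entries $0$; its inverse $D=(d_{nk})$ is lower triangular, explicitly $d_{nk}=\frac1r\sum_{v=0}^{n-k}\rho_1^{\,n-k-v}\rho_2^{\,v}$ for $0\le k\le n$ and $d_{nk}=0$ for $k>n$, where $\rho_{1,2}=\frac{-s\pm\sqrt{s^2-4tr}}{2r}$. For $\mu\in\{c_0,c,\ell_p\}$, $\mu^\lambda(\widehat B)=\{x\in\omega:(\widehat W_n(x))_n\in\mu\}$, normed by $\|x\|=\sup_n|\widehat W_n(x)|$ for $\mu\in\{c_0,c\}$ and $\|x\|=(\sum_n|\widehat W_n(x)|^p)^{1/p}$ for $\mu=\ell_p$. A sequence $(e_k)$ in a normed space $X$ is a Schauder basis if every $x\in X$ has a unique expansion $x=\sum_k\beta_ke_k$ convergent in norm. *)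

theory Defs
  imports "HOL-Analysis.Analysis"
begin

text \<open>Sequences in omega are functions nat => complex. Terms with negative
subscript are 0: sequence entry x_{j-i} is written shiftseq x i j.\<close>

definition shiftseq :: "(nat \<Rightarrow> 'a::zero) \<Rightarrow> nat \<Rightarrow> nat \<Rightarrow> 'a" where
  "shiftseq x i j = (if j < i then 0 else x (j - i))"

definition lprev :: "(nat \<Rightarrow> real) \<Rightarrow> nat \<Rightarrow> real" where
  "lprev lam k = (if k = 0 then 0 else lam (k - 1))"

definition Bmat :: "real \<Rightarrow> real \<Rightarrow> real \<Rightarrow> nat \<Rightarrow> nat \<Rightarrow> real" where
  "Bmat r s t n k = (if k = n then r else if k + 1 = n then s else if k + 2 = n then t else 0)"

definition lower_triangular :: "(nat \<Rightarrow> nat \<Rightarrow> real) \<Rightarrow> bool" where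
  "lower_triangular M \<longleftrightarrow> (\<forall>n k. n < k \<longrightarrow> M n k = 0)"

text \<open>The inverse D = (d_nk) of B(r,s,t): the (unique) lower triangular matrix
with B D = I (products of lower triangular matrices are finite sums).\<close>
definition Dinv :: "real \<Rightarrow> real \<Rightarrow> real \<Rightarrow> nat \<Rightarrow> nat \<Rightarrow> real" where
  "Dinv r s t = (THE D. lower_triangular D \<and>
     (\<forall>n k. (\<Sum>j\<le>n. Bmat r s t n j * D j k) = (if n = k then 1 else 0)))"

definition What :: "(nat \<Rightarrow> real) \<Rightarrow> real \<Rightarrow> real \<Rightarrow> real \<Rightarrow> (nat \<Rightarrow> complex) \<Rightarrow> nat \<Rightarrow> complex" where
  "What lam r s t x k = of_real (1 / lam k) *
     (\<Sum>j\<le>k. of_real (lam j - lprev lam j) *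
        (of_real r * x j + of_real s * shiftseq x 1 j + of_real t * shiftseq x 2 j))"

definition c0_lam :: "(nat \<Rightarrow> real) \<Rightarrow> real \<Rightarrow> real \<Rightarrow> real \<Rightarrow> (nat \<Rightarrow> complex) set" where
  "c0_lam lam r s t = {x. (\<lambda>n. What lam r s t x n) \<longlonglongrightarrow> 0}"

definition c_lam :: "(nat \<Rightarrow> real) \<Rightarrow> real \<Rightarrow> real \<Rightarrow> real \<Rightarrow> (nat \<Rightarrow> complex) set" where
  "c_lam lam r s t = {x. convergent (\<lambda>n. What lam r s t x n)}"

definition lp_lam :: "real \<Rightarrow> (nat \<Rightarrow> real) \<Rightarrow> real \<Rightarrow> real \<Rightarrow> real \<Rightarrow> (nat \<Rightarrow> complex) set" where
  "lp_lam p lam r s t = {x. summable (\<lambda>n. norm (What lam r s t x n) powr p)}"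

definition sup_norm_lam :: "(nat \<Rightarrow> real) \<Rightarrow> real \<Rightarrow> real \<Rightarrow> real \<Rightarrow> (nat \<Rightarrow> complex) \<Rightarrow> real" where
  "sup_norm_lam lam r s t x = (SUP n. norm (What lam r s t x n))"

definition p_norm_lam :: "real \<Rightarrow> (nat \<Rightarrow> real) \<Rightarrow> real \<Rightarrow> real \<Rightarrow> real \<Rightarrow> (nat \<Rightarrow> complex) \<Rightarrow> real" where
  "p_norm_lam p lam r s t x = (\<Sum>n. norm (What lam r s t x n) powr p) powr (1 / p)"

definition schauder_basis ::
  "(nat \<Rightarrow> complex) set \<Rightarrow> ((nat \<Rightarrow> complex) \<Rightarrow> real) \<Rightarrow> (nat \<Rightarrow> nat \<Rightarrow> complex) \<Rightarrow> bool" where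
  "schauder_basis X N e \<longleftrightarrow> (\<forall>k. e k \<in> X) \<and>
     (\<forall>x\<in>X. \<exists>!\<beta>::nat \<Rightarrow> complex.
        (\<lambda>m. N (\<lambda>n. x n - (\<Sum>k<m. \<beta> k * e k n))) \<longlonglongrightarrow> 0)"

definition bk :: "(nat \<Rightarrow> real) \<Rightarrow> real \<Rightarrow> real \<Rightarrow> real \<Rightarrow> nat \<Rightarrow> nat \<Rightarrow> complex" where
  "bk lam r s t k n =
     (if k < n then of_real (Dinv r s t n k * lam k / (lam k - lprev lam k)
                             - Dinv r s t n (k + 1) * lam k / (lam (k + 1) - lam k))
      else if n = k then of_real ((1 / r) * (lam k / (lam k - lprev lam k)))
      else 0)"

definition bseq :: "real \<Rightarrow> real \<Rightarrow> real \<Rightarrow> nat \<Rightarrow> complex" where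
  "bseq r s t k = of_real (\<Sum>j\<le>k. Dinv r s t k j)"

end

theory Submission
  imports Defs
begin

text \<open>\<open>\<widehat>W(x)\<close> is the mean of \<open>B x\<close> with weights \<open>\<lambda>\<^sub>j - \<lambda>\<^sub>j\<^sub>-\<^sub>1\<close>, which
telescope to \<open>\<lambda>\<^sub>k\<close>. Since \<open>B D = I\<close>, \<open>B b = (1,1,\<dots>)\<close>, and \<open>B b\<^sup>(\<^sup>k\<^sup>)(\<lambda>)\<close> is
supported on \<open>{k, k+1}\<close> with values that cancel the weights there; so the linear map
\<open>\<widehat>W\<close> sends \<open>b\<close> to the constant sequence \<open>1\<close> and \<open>b\<^sup>(\<^sup>k\<^sup>)(\<lambda>)\<close> to the \<open>k\<close>-th unit
sequence. All three norms are computed from \<open>\<widehat>W(x)\<close>, so the claims reduce to the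
unit sequences being a basis of \<open>c\<^sub>0\<close> and \<open>\<ell>\<^sub>p\<close>, and together with \<open>(1,1,\<dots>)\<close>
a basis of \<open>c\<close>.\<close>

lemma Bmat_row_sum:
  "(\<Sum>i\<le>j. Bmat r s t j i * g i) = r * g j + s * shiftseq g 1 j + t * shiftseq g 2 j"
proof (cases j)
  case 0 then show ?thesis by (simp add: Bmat_def shiftseq_def)
next
  case (Suc m)
  show ?thesis
  proof (cases m)
    case 0 then show ?thesis using Suc by (simp add: Bmat_def shiftseq_def)
  next
    case (Suc q)
    have "(\<Sum>i<q. Bmat r s t j i * g i) = 0"
      by (rule sum.neutral) (auto simp: Bmat_def \<open>j = Suc m\<close> Suc)
    moreover have "(\<Sum>i\<le>j. Bmat r s t j i * g i) = (\<Sum>i<q. Bmat r s t j i * g i)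
       + Bmat r s t j q * g q + Bmat r s t j (Suc q) * g (Suc q)
       + Bmat r s t j (Suc (Suc q)) * g (Suc (Suc q))"
      using \<open>j = Suc m\<close> Suc by (simp add: lessThan_Suc_atMost[symmetric])
    ultimately show ?thesis using \<open>j = Suc m\<close> Suc by (simp add: Bmat_def shiftseq_def)
  qed
qed

text \<open>Instead of the closed form in \<open>\<rho>\<^sub>1, \<rho>\<^sub>2\<close>, the inverse is built from the
recurrence \<open>r d\<^sub>m\<^sub>+\<^sub>2 + s d\<^sub>m\<^sub>+\<^sub>1 + t d\<^sub>m = 0\<close>: its \<open>k\<close>-th column is this
sequence shifted down by \<open>k\<close>.\<close>

fun band_inv_seq :: "real \<Rightarrow> real \<Rightarrow> real \<Rightarrow> nat \<Rightarrow> real" where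
  "band_inv_seq r s t 0 = 1 / r"
| "band_inv_seq r s t (Suc 0) = - s / r * (1 / r)"
| "band_inv_seq r s t (Suc (Suc n)) =
     - (s * band_inv_seq r s t (Suc n) + t * band_inv_seq r s t n) / r"

definition band_inv :: "real \<Rightarrow> real \<Rightarrow> real \<Rightarrow> nat \<Rightarrow> nat \<Rightarrow> real" where
  "band_inv r s t n k = (if k \<le> n then band_inv_seq r s t (n - k) else 0)"

lemma Bmat_band_inv:
  assumes r: "r \<noteq> 0"
  shows "(\<Sum>j\<le>n. Bmat r s t n j * band_inv r s t j k) = (if n = k then 1 else 0)"
  unfolding Bmat_row_sum
proof -
  have "n < k \<or> n = k \<or> n = Suc k \<or> n = Suc (Suc (k + (n - k - 2)))" by arith
  then consider "n < k" | "n = k" | "n = Suc k" | m where "n = Suc (Suc (k + m))"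
    by blast
  then show "r * band_inv r s t n k + s * shiftseq (\<lambda>j. band_inv r s t j k) 1 n
      + t * shiftseq (\<lambda>j. band_inv r s t j k) 2 n = (if n = k then 1 else 0)"
  proof cases
    case 4
    then have "r * band_inv r s t n k + s * shiftseq (\<lambda>j. band_inv r s t j k) 1 n
        + t * shiftseq (\<lambda>j. band_inv r s t j k) 2 n
      = r * band_inv_seq r s t (Suc (Suc m)) + s * band_inv_seq r s t (Suc m)
        + t * band_inv_seq r s t m"
      by (simp add: band_inv_def shiftseq_def)
    also have "\<dots> = 0"
      using r by (simp only: band_inv_seq.simps(3)) simp
    finally show ?thesis using 4 by simp
  qed (use r in \<open>auto simp: band_inv_def shiftseq_def\<close>)
qed

lemma Dinv_ex1:
  assumes r: "r \<noteq> 0"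
  shows "\<exists>!D. lower_triangular D \<and>
     (\<forall>n k. (\<Sum>j\<le>n. Bmat r s t n j * D j k) = (if n = k then 1 else 0))"
proof
  show "lower_triangular (band_inv r s t) \<and>
     (\<forall>n k. (\<Sum>j\<le>n. Bmat r s t n j * band_inv r s t j k) = (if n = k then 1 else 0))"
    using Bmat_band_inv[OF r] by (auto simp: lower_triangular_def band_inv_def)
next
  fix D
  assume D: "lower_triangular D \<and>
     (\<forall>n k. (\<Sum>j\<le>n. Bmat r s t n j * D j k) = (if n = k then 1 else 0))"
  have "\<forall>k. D n k = band_inv r s t n k" for n
  proof (induction n rule: less_induct)
    case (less n)
    show ?case
    proof
      fix k
      have "r * D n k + s * shiftseq (\<lambda>j. D j k) 1 n + t * shiftseq (\<lambda>j. D j k) 2 n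
          = r * band_inv r s t n k + s * shiftseq (\<lambda>j. band_inv r s t j k) 1 n
            + t * shiftseq (\<lambda>j. band_inv r s t j k) 2 n"
        using D Bmat_band_inv[OF r, where n=n and s=s and t=t and k=k]
        unfolding Bmat_row_sum by simp
      moreover have "shiftseq (\<lambda>j. D j k) i n = shiftseq (\<lambda>j. band_inv r s t j k) i n"
        if "0 < i" for i
        using less that by (simp add: shiftseq_def)
      ultimately have "r * D n k = r * band_inv r s t n k" by simp
      then show "D n k = band_inv r s t n k" using r by simp
    qed
  qed
  then show "D = band_inv r s t" by (auto simp: fun_eq_iff)
qed

lemma
  assumes "r \<noteq> 0"
  shows lower_triangular_Dinv: "lower_triangular (Dinv r s t)"
    and Bmat_Dinv: "(\<Sum>j\<le>n. Bmat r s t n j * Dinv r s t j k) = (if n = k then 1 else 0)"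
  using theI'[OF Dinv_ex1[OF assms, of s t]] unfolding Dinv_def[symmetric] by auto

lemma Dinv_above_diag: "r \<noteq> 0 \<Longrightarrow> n < k \<Longrightarrow> Dinv r s t n k = 0"
  using lower_triangular_Dinv by (auto simp: lower_triangular_def)

lemma Dinv_diag:
  assumes r: "r \<noteq> 0"
  shows "Dinv r s t k k = 1 / r"
proof -
  have "r * Dinv r s t k k = 1"
    using Bmat_Dinv[OF r, where n=k and s=s and t=t and k=k] unfolding Bmat_row_sum
    by (cases "k = 0"; cases "k < 2"; simp add: shiftseq_def Dinv_above_diag[OF r])
  then show ?thesis using r by (simp add: field_simps)
qed

lemma bk_eq_Dinv:
  assumes r: "r \<noteq> 0"
  shows "bk lam r s t k n = complex_of_real (Dinv r s t n k * (lam k / (lam k - lprev lam k))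
                      - Dinv r s t n (Suc k) * (lam k / (lam (Suc k) - lam k)))"
proof -
  consider "k < n" | "n = k" | "n < k" by linarith
  then show ?thesis
    by cases (simp_all add: bk_def Dinv_diag[OF r] Dinv_above_diag[OF r])
qed

lemma What_add_scale:
  "What lam r s t (\<lambda>n. x n + c * z n) k = What lam r s t x k + c * What lam r s t z k"
proof -
  define T where "T y j = complex_of_real (lam j - lprev lam j) * (complex_of_real r * y j
        + complex_of_real s * shiftseq y 1 j + complex_of_real t * shiftseq y 2 j)" for y j
  have "T (\<lambda>n. x n + c * z n) j = T x j + c * T z j" for j
    unfolding T_def by (simp add: shiftseq_def algebra_simps)
  then have "(\<Sum>j\<le>k. T (\<lambda>n. x n + c * z n) j) = (\<Sum>j\<le>k. T x j) + c * (\<Sum>j\<le>k. T z j)"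
    by (simp add: sum.distrib sum_distrib_left)
  moreover have "What lam r s t y k = complex_of_real (1 / lam k) * (\<Sum>j\<le>k. T y j)" for y
    unfolding What_def T_def by simp
  ultimately show ?thesis by (simp add: add_divide_distrib)
qed

lemma What_diff_sum:
  "What lam r s t (\<lambda>n. x n - (\<Sum>i<(m::nat). c i * e i n)) k
   = What lam r s t x k - (\<Sum>i<m. c i * What lam r s t (e i) k)"
proof (induction m)
  case (Suc m)
  have "What lam r s t (\<lambda>n. x n - (\<Sum>i<Suc m. c i * e i n)) k
    = What lam r s t (\<lambda>n. (x n - (\<Sum>i<m. c i * e i n)) + (- c m) * e m n) k"
    by (simp add: algebra_simps)
  also have "\<dots> = What lam r s t (\<lambda>n. x n - (\<Sum>i<m. c i * e i n)) k
      + (- c m) * What lam r s t (e m) k"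
    by (rule What_add_scale)
  finally show ?case using Suc by simp
qed simp

lemma What_of_real:
  "What lam r s t (\<lambda>n. complex_of_real (g n)) k = complex_of_real
   ((1 / lam k) * (\<Sum>j\<le>k. (lam j - lprev lam j) * (\<Sum>i\<le>j. Bmat r s t j i * g i)))"
  unfolding Bmat_row_sum What_def
  by (simp add: shiftseq_def if_distrib[of complex_of_real] cong: if_cong)

lemma sum_lprev_telescope: "(\<Sum>j\<le>n. lam j - lprev lam j) = (lam n :: real)"
  by (induction n) (auto simp: lprev_def)

lemma lprev_less:
  assumes "strict_mono lam" "\<And>k. lam k > 0"
  shows "lprev lam k < lam k"
  using assms by (cases k) (auto simp: lprev_def strict_mono_def)

lemma Bmat_row_sum_Dinv:
  assumes r: "r \<noteq> 0"
  shows "(\<Sum>j\<le>m. Bmat r s t m j * (\<Sum>i\<le>j. Dinv r s t j i)) = 1"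
proof -
  have "(\<Sum>j\<le>m. Bmat r s t m j * (\<Sum>i\<le>j. Dinv r s t j i))
      = (\<Sum>j\<le>m. Bmat r s t m j * (\<Sum>i\<le>m. Dinv r s t j i))"
  proof (rule sum.cong[OF refl])
    fix j assume "j \<in> {..m}"
    then have "(\<Sum>i\<le>m. Dinv r s t j i) = (\<Sum>i\<le>j. Dinv r s t j i)"
      by (intro sum.mono_neutral_right) (auto simp: Dinv_above_diag[OF r])
    then show "Bmat r s t m j * (\<Sum>i\<le>j. Dinv r s t j i) = Bmat r s t m j * (\<Sum>i\<le>m. Dinv r s t j i)"
      by simp
  qed
  also have "\<dots> = (\<Sum>j\<le>m. \<Sum>i\<le>m. Bmat r s t m j * Dinv r s t j i)"
    by (simp add: sum_distrib_left)
  also have "\<dots> = (\<Sum>i\<le>m. \<Sum>j\<le>m. Bmat r s t m j * Dinv r s t j i)"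
    by (rule sum.swap)
  also have "\<dots> = 1" by (simp add: Bmat_Dinv[OF r])
  finally show ?thesis .
qed

lemma eq_if_coordinate_bound_tendsto_zero:
  fixes y \<beta> :: "nat \<Rightarrow> 'a::real_normed_vector"
  assumes "N \<longlonglongrightarrow> 0" and "\<And>n m. n < m \<Longrightarrow> norm (y n - \<beta> n) \<le> N m"
  shows "\<beta> = y"
proof
  fix n
  have "norm (y n - \<beta> n) \<le> 0"
    by (rule LIMSEQ_le_const[OF assms(1)]) (use assms(2) in \<open>auto intro!: exI[of _ "Suc n"]\<close>)
  then show "\<beta> n = y n" by simp
qed

lemma diff_truncated_self:
  fixes y :: "nat \<Rightarrow> 'a::group_add"
  shows "y n - (if n < m then y n else 0) = (if n < m then 0 else y n)"
  by simp

lemma delta_seq_tendsto_zero: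
  fixes c :: "'a::real_normed_vector"
  shows "(\<lambda>n. if n = k then c else 0) \<longlonglongrightarrow> 0"
  by (intro tendsto_eventually eventually_sequentiallyI[of "Suc k"]) simp

lemma SUP_norm_truncated_tendsto_zero:
  fixes y :: "nat \<Rightarrow> 'a::real_normed_vector"
  assumes "y \<longlonglongrightarrow> 0"
  shows "(\<lambda>m. SUP n. norm (if n < m then 0 else y n)) \<longlonglongrightarrow> 0"
proof (rule LIMSEQ_I)
  fix e :: real assume e: "0 < e"
  from LIMSEQ_D[OF assms, of "e/2"] e
  obtain M where M: "\<And>n. n \<ge> M \<Longrightarrow> norm (y n) < e/2" by auto
  have "norm ((SUP n. norm (if n < m then 0 else y n)) - 0) < e" if m: "m \<ge> M" for m
  proof -
    have bound: "norm (if n < m then 0 else y n) \<le> e/2" for n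
      using M[of n] m e by auto
    have "(SUP n. norm (if n < m then 0 else y n)) \<le> e/2"
      by (rule cSUP_least) (use bound in auto)
    moreover have "norm (if 0 < m then 0 else y 0) \<le> (SUP n. norm (if n < m then 0 else y n))"
      by (rule cSUP_upper[OF _ bdd_aboveI2[OF bound]]) simp
    then have "0 \<le> (SUP n. norm (if n < m then 0 else y n))"
      by (meson norm_ge_zero order_trans)
    ultimately show ?thesis using e by auto
  qed
  then show "\<exists>no. \<forall>n\<ge>no. norm ((SUP n'. norm (if n' < n then 0 else y n')) - 0) < e" by blast
qed

lemma bdd_above_norm_minus_truncated:
  fixes y :: "nat \<Rightarrow> 'a::real_normed_vector"
  assumes "\<And>n. norm (y n) \<le> B"
  shows "bdd_above (range (\<lambda>n. norm (y n - (if n < m then \<beta> n else 0))))"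
proof (rule bdd_aboveI2)
  fix n
  have "norm (if n < m then \<beta> n else 0) \<le> (\<Sum>i<m. norm (\<beta> i))"
    by (auto intro: member_le_sum[of n "{..<m}" "\<lambda>i. norm (\<beta> i)", simplified] sum_nonneg)
  then show "norm (y n - (if n < m then \<beta> n else 0)) \<le> B + (\<Sum>i<m. norm (\<beta> i))"
    using norm_triangle_ineq4[of "y n" "if n < m then \<beta> n else 0"] assms[of n] by linarith
qed

lemma SUP_norm_minus_truncated_unique:
  fixes y :: "nat \<Rightarrow> 'a::real_normed_vector"
  assumes B: "\<And>n. norm (y n) \<le> B"
    and lim: "(\<lambda>m. SUP n. norm (y n - (if n < m then \<beta> n else 0))) \<longlonglongrightarrow> 0"
  shows "\<beta> = y"
proof (rule eq_if_coordinate_bound_tendsto_zero[OF lim])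
  fix n m :: nat assume "n < m"
  then have "norm (y n - \<beta> n) = norm (y n - (if n < m then \<beta> n else 0))" by simp
  also have "\<dots> \<le> (SUP n. norm (y n - (if n < m then \<beta> n else 0)))"
    by (rule cSUP_upper) (use bdd_above_norm_minus_truncated[OF B] in auto)
  finally show "norm (y n - \<beta> n) \<le> (SUP n. norm (y n - (if n < m then \<beta> n else 0)))" .
qed

lemma powr_suminf_truncated_tendsto_zero:
  fixes y :: "nat \<Rightarrow> 'a::real_normed_vector"
  assumes p: "1 \<le> p" and S: "summable (\<lambda>n. norm (y n) powr p)"
  shows "(\<lambda>m. (\<Sum>n. norm (if n < m then 0 else y n) powr p) powr (1 / p)) \<longlonglongrightarrow> 0"
proof -
  define f where "f n = norm (y n) powr p" for n
  have g: "(\<lambda>n. norm (if n < m then 0 else y n) powr p) = (\<lambda>n. if n < m then 0 else f n)" for m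
    by (auto simp: f_def fun_eq_iff)
  have sg: "summable (\<lambda>n. if n < m then 0 else f n)" for m
    using S unfolding f_def[symmetric]
    by (subst summable_cong[where g = f]) (auto simp: eventually_at_top_linorder intro!: exI[of _ m])
  have tail: "(\<Sum>n. if n < m then 0 else f n) = suminf f - (\<Sum>i<m. f i)" for m
  proof -
    have "(\<Sum>n. if n < m then 0 else f n)
        = (\<Sum>n. if n + m < m then 0 else f (n + m)) + (\<Sum>i<m. if i < m then 0 else f i)"
      by (rule suminf_split_initial_segment[OF sg])
    also have "\<dots> = (\<Sum>n. f (n + m))" by simp
    also have "\<dots> = suminf f - (\<Sum>i<m. f i)"
      by (rule suminf_minus_initial_segment) (use S in \<open>simp add: f_def\<close>)
    finally show ?thesis .
  qed
  have "(\<lambda>m. suminf f - (\<Sum>i<m. f i)) \<longlonglongrightarrow> suminf f - suminf f"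
    by (intro tendsto_diff tendsto_const summable_LIMSEQ) (use S in \<open>simp add: f_def\<close>)
  then have "(\<lambda>m. \<Sum>n. if n < m then 0 else f n) \<longlonglongrightarrow> 0" unfolding tail by simp
  moreover have "0 \<le> (\<Sum>n. if n < m then 0 else f n)" for m
    by (rule suminf_nonneg[OF sg]) (auto simp: f_def)
  ultimately show ?thesis unfolding g
    by (intro tendsto_zero_powrI[OF _ tendsto_const]) (use p in auto)
qed

lemma powr_suminf_minus_truncated_unique:
  fixes y :: "nat \<Rightarrow> 'a::real_normed_vector"
  assumes p: "1 \<le> p" and S: "summable (\<lambda>n. norm (y n) powr p)"
    and lim: "(\<lambda>m. (\<Sum>n. norm (y n - (if n < m then \<beta> n else 0)) powr p) powr (1 / p)) \<longlonglongrightarrow> 0"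
  shows "\<beta> = y"
proof (rule eq_if_coordinate_bound_tendsto_zero[OF lim])
  fix n m :: nat assume "n < m"
  define g where "g = (\<lambda>i. norm (y i - (if i < m then \<beta> i else 0)) powr p)"
  have "summable g"
    using S unfolding g_def
    by (subst summable_cong[where g = "\<lambda>n. norm (y n) powr p"])
      (auto simp: eventually_at_top_linorder intro!: exI[of _ m])
  then have "g n \<le> suminf g"
    using sum_le_suminf[of g "{n}"] by (auto simp: g_def)
  moreover have "g n = norm (y n - \<beta> n) powr p" using \<open>n < m\<close> by (simp add: g_def)
  ultimately have "(norm (y n - \<beta> n) powr p) powr (1/p) \<le> suminf g powr (1/p)"
    using p by (intro powr_mono2) auto
  with p show "norm (y n - \<beta> n) \<le> suminf g powr (1 / p)"
    by (simp add: powr_powr)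
qed

lemma SUP_norm_minus_const_truncated_unique:
  fixes y :: "nat \<Rightarrow> 'a::real_normed_vector"
  assumes conv: "y \<longlonglongrightarrow> l"
    and lim: "(\<lambda>m. SUP n. norm (y n - (if 0 < m then \<beta> 0 else 0)
                                - (if n + 1 < m then \<beta> (Suc n) else 0))) \<longlonglongrightarrow> 0"
  shows "\<beta> 0 = l" and "\<beta> (Suc n) = y n - l"
proof -
  define S where "S m = (SUP n. norm (y n - (if 0 < m then \<beta> 0 else 0)
                                - (if n + 1 < m then \<beta> (Suc n) else 0)))" for m
  obtain B where B: "\<And>n. norm (y n) \<le> B"
    using convergent_imp_Bseq[of y] conv by (auto simp: convergent_def elim!: BseqE)
  have bdd: "bdd_above (range (\<lambda>n. norm (y n - (if 0 < m then \<beta> 0 else 0)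
                                 - (if n + 1 < m then \<beta> (Suc n) else 0))))" for m
  proof -
    have "norm (y n - (if 0 < m then \<beta> 0 else 0)) \<le> B + norm (\<beta> 0)" for n
      using B[of n] norm_triangle_ineq4[of "y n" "\<beta> 0"] norm_ge_zero[of "\<beta> 0"]
      by (cases "0 < m") (simp_all add: add_increasing2)
    from bdd_above_norm_minus_truncated[where y = "\<lambda>n. y n - (if 0 < m then \<beta> 0 else 0)",
        OF this, where m = "m - 1" and \<beta> = "\<lambda>n. \<beta> (Suc n)"]
    show ?thesis by (auto simp: less_diff_conv)
  qed
  have le: "norm (y n - (if 0 < m then \<beta> 0 else 0) - (if n + 1 < m then \<beta> (Suc n) else 0))
      \<le> S m" for n m
    unfolding S_def by (rule cSUP_upper[OF _ bdd]) simp
  have S0: "S \<longlonglongrightarrow> 0" using lim unfolding S_def .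
  have "(\<lambda>m. norm (y m - \<beta> 0)) \<longlonglongrightarrow> 0"
  proof (rule tendsto_sandwich[OF _ _ tendsto_const S0])
    show "\<forall>\<^sub>F m in sequentially. norm (y m - \<beta> 0) \<le> S m"
      unfolding eventually_at_top_linorder
    proof (intro exI allI impI)
      fix m :: nat assume "1 \<le> m"
      then show "norm (y m - \<beta> 0) \<le> S m" using le[of m m] by simp
    qed
  qed simp
  then have "y \<longlonglongrightarrow> \<beta> 0"
    by (simp add: tendsto_norm_zero_iff LIM_zero_cancel)
  then show \<beta>0: "\<beta> 0 = l" using conv LIMSEQ_unique by blast
  have "\<beta> \<circ> Suc = (\<lambda>n. y n - l)"
  proof (rule eq_if_coordinate_bound_tendsto_zero[OF LIMSEQ_Suc[OF S0]])
    fix n m :: nat assume "n < m"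
    then show "norm (y n - l - (\<beta> \<circ> Suc) n) \<le> S (Suc m)"
      using le[of n "Suc m"] \<beta>0 by (simp add: algebra_simps)
  qed
  then show "\<beta> (Suc n) = y n - l" by (simp add: fun_eq_iff)
qed

context
  fixes r s t :: real and lam :: "nat \<Rightarrow> real"
  assumes r: "r \<noteq> 0" and lam_mono: "strict_mono lam" and lam_pos: "\<And>k. lam k > 0"
begin

lemma What_bk: "What lam r s t (bk lam r s t k) = (\<lambda>n. if n = k then 1 else 0)"
proof
  fix n
  define a where "a = lam k / (lam k - lprev lam k)"
  define b where "b = lam k / (lam (Suc k) - lam k)"
  have gaps: "(lam k - lprev lam k) * a = lam k" "(lam (Suc k) - lam k) * b = lam k"
    using lprev_less[OF lam_mono lam_pos, of k] strict_monoD[OF lam_mono, of k "Suc k"]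
    by (auto simp: a_def b_def)
  have "(\<Sum>i\<le>j. Bmat r s t j i * (Dinv r s t i k * a - Dinv r s t i (Suc k) * b))
      = (\<Sum>i\<le>j. Bmat r s t j i * Dinv r s t i k) * a
        - (\<Sum>i\<le>j. Bmat r s t j i * Dinv r s t i (Suc k)) * b" for j
    by (simp add: sum_subtractf sum_distrib_right right_diff_distrib mult.assoc)
  then have inner: "(\<Sum>i\<le>j. Bmat r s t j i * (Dinv r s t i k * a - Dinv r s t i (Suc k) * b))
      = (if j = k then a else 0) - (if j = Suc k then b else 0)" for j
    by (simp add: Bmat_Dinv[OF r])
  have "bk lam r s t k = (\<lambda>n. complex_of_real (Dinv r s t n k * a - Dinv r s t n (Suc k) * b))"
    using bk_eq_Dinv[OF r] by (simp add: a_def b_def fun_eq_iff)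
  then have "What lam r s t (bk lam r s t k) n = complex_of_real ((1 / lam n) *
     (\<Sum>j\<le>n. (lam j - lprev lam j) * ((if j = k then a else 0) - (if j = Suc k then b else 0))))"
    by (simp only: What_of_real inner)
  also have "(\<Sum>j\<le>n. (lam j - lprev lam j) * ((if j = k then a else 0) - (if j = Suc k then b else 0)))
     = (\<Sum>j\<le>n. if j = k then (lam j - lprev lam j) * a else 0)
       - (\<Sum>j\<le>n. if j = Suc k then (lam j - lprev lam j) * b else 0)"
    unfolding sum_subtractf[symmetric] by (rule sum.cong) auto
  also have "\<dots> = (if n = k then lam k else 0)"
    using gaps by (simp add: sum.delta lprev_def)
  finally show "What lam r s t (bk lam r s t k) n = (if n = k then 1 else 0)"
    using lam_pos[of n] by auto
qed

lemma What_bseq: "What lam r s t (bseq r s t) = (\<lambda>n. 1)"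
proof
  fix n
  have "bseq r s t = (\<lambda>n. complex_of_real (\<Sum>i\<le>n. Dinv r s t n i))"
    by (simp add: bseq_def fun_eq_iff)
  then have "What lam r s t (bseq r s t) n
      = complex_of_real ((1 / lam n) * (\<Sum>j\<le>n. (lam j - lprev lam j) * 1))"
    by (simp only: What_of_real Bmat_row_sum_Dinv[OF r])
  then show "What lam r s t (bseq r s t) n = 1"
    using lam_pos[of n] by (simp add: sum_lprev_telescope)
qed

lemma What_minus_bk_sum:
  "What lam r s t (\<lambda>n. x n - (\<Sum>k<m. \<beta> k * bk lam r s t k n)) n
    = What lam r s t x n - (if n < m then \<beta> n else 0)"
  unfolding What_diff_sum What_bk
  by (simp add: if_distrib[of "\<lambda>z. _ * z"] cong: if_cong)

lemma What_minus_bseq_bk_sum: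
  "What lam r s t (\<lambda>n. x n - L * bseq r s t n - (\<Sum>k<m. \<beta> k * bk lam r s t k n)) n
    = What lam r s t x n - L - (if n < m then \<beta> n else 0)"
proof -
  have "What lam r s t (\<lambda>n. x n - L * bseq r s t n - (\<Sum>k<m. \<beta> k * bk lam r s t k n)) n
      = What lam r s t (\<lambda>n. x n + (- L) * bseq r s t n) n - (if n < m then \<beta> n else 0)"
    using What_minus_bk_sum[where x = "\<lambda>n. x n + (- L) * bseq r s t n"] by simp
  also have "\<dots> = What lam r s t x n - L - (if n < m then \<beta> n else 0)"
    by (simp only: What_add_scale What_bseq) simp
  finally show ?thesis .
qed

lemma What_minus_c_basis_sum:
  "What lam r s t (\<lambda>n. x n - (\<Sum>i<m. \<beta> i * (if i = 0 then bseq r s t else bk lam r s t (i - 1)) n)) n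
    = What lam r s t x n - (if 0 < m then \<beta> 0 else 0) - (if n + 1 < m then \<beta> (Suc n) else 0)"
proof (cases m)
  case (Suc m')
  have "(\<lambda>n. x n - (\<Sum>i<m. \<beta> i * (if i = 0 then bseq r s t else bk lam r s t (i - 1)) n))
      = (\<lambda>n. x n - \<beta> 0 * bseq r s t n - (\<Sum>k<m'. \<beta> (Suc k) * bk lam r s t k n))"
    unfolding Suc sum.lessThan_Suc_shift by (simp add: fun_eq_iff)
  then show ?thesis
    using Suc by (simp only: What_minus_bseq_bk_sum) simp
qed simp

lemma sup_norm_lam_minus_bk_sum:
  "sup_norm_lam lam r s t (\<lambda>n. x n - (\<Sum>k<m. \<beta> k * bk lam r s t k n))
     = (SUP n. norm (What lam r s t x n - (if n < m then \<beta> n else 0)))"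
  unfolding sup_norm_lam_def What_minus_bk_sum ..

lemma p_norm_lam_minus_bk_sum:
  "p_norm_lam p lam r s t (\<lambda>n. x n - (\<Sum>k<m. \<beta> k * bk lam r s t k n))
     = (\<Sum>n. norm (What lam r s t x n - (if n < m then \<beta> n else 0)) powr p) powr (1 / p)"
  unfolding p_norm_lam_def What_minus_bk_sum ..

lemma c0_lam_expansion:
  assumes "x \<in> c0_lam lam r s t"
  shows "(\<lambda>m. sup_norm_lam lam r s t
            (\<lambda>n. x n - (\<Sum>k<m. What lam r s t x k * bk lam r s t k n))) \<longlonglongrightarrow> 0"
  unfolding sup_norm_lam_minus_bk_sum diff_truncated_self
  using SUP_norm_truncated_tendsto_zero assms by (simp add: c0_lam_def)

lemma c0_lam_schauder_basis:
  "schauder_basis (c0_lam lam r s t) (sup_norm_lam lam r s t) (bk lam r s t)"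
  unfolding schauder_basis_def
proof (intro conjI allI ballI)
  show "bk lam r s t k \<in> c0_lam lam r s t" for k
    using delta_seq_tendsto_zero by (simp add: c0_lam_def What_bk)
  fix x assume x: "x \<in> c0_lam lam r s t"
  then obtain B where B: "\<And>n. norm (What lam r s t x n) \<le> B"
    using convergent_imp_Bseq[of "What lam r s t x"]
    by (auto simp: c0_lam_def convergent_def elim!: BseqE)
  show "\<exists>!\<beta>. (\<lambda>m. sup_norm_lam lam r s t (\<lambda>n. x n - (\<Sum>k<m. \<beta> k * bk lam r s t k n))) \<longlonglongrightarrow> 0"
  proof (rule ex1I[of _ "What lam r s t x"])
    fix \<beta>
    assume "(\<lambda>m. sup_norm_lam lam r s t (\<lambda>n. x n - (\<Sum>k<m. \<beta> k * bk lam r s t k n))) \<longlonglongrightarrow> 0"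
    then show "\<beta> = What lam r s t x"
      by (intro SUP_norm_minus_truncated_unique[OF B]) (simp only: sup_norm_lam_minus_bk_sum)
  qed (rule c0_lam_expansion[OF x])
qed

lemma lp_lam_expansion:
  assumes "1 \<le> p" and "x \<in> lp_lam p lam r s t"
  shows "(\<lambda>m. p_norm_lam p lam r s t
            (\<lambda>n. x n - (\<Sum>k<m. What lam r s t x k * bk lam r s t k n))) \<longlonglongrightarrow> 0"
  unfolding p_norm_lam_minus_bk_sum diff_truncated_self
  using powr_suminf_truncated_tendsto_zero assms by (simp add: lp_lam_def)

lemma lp_lam_schauder_basis:
  assumes p: "1 \<le> p"
  shows "schauder_basis (lp_lam p lam r s t) (p_norm_lam p lam r s t) (bk lam r s t)"
  unfolding schauder_basis_def
proof (intro conjI allI ballI)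
  show "bk lam r s t k \<in> lp_lam p lam r s t" for k
    using p by (auto simp: lp_lam_def What_bk split: if_split_asm
        intro!: summable_finite[of "{k}"])
  fix x assume x: "x \<in> lp_lam p lam r s t"
  then have S: "summable (\<lambda>n. norm (What lam r s t x n) powr p)" by (simp add: lp_lam_def)
  show "\<exists>!\<beta>. (\<lambda>m. p_norm_lam p lam r s t (\<lambda>n. x n - (\<Sum>k<m. \<beta> k * bk lam r s t k n))) \<longlonglongrightarrow> 0"
  proof (rule ex1I[of _ "What lam r s t x"])
    fix \<beta>
    assume "(\<lambda>m. p_norm_lam p lam r s t (\<lambda>n. x n - (\<Sum>k<m. \<beta> k * bk lam r s t k n))) \<longlonglongrightarrow> 0"
    then show "\<beta> = What lam r s t x"
      by (intro powr_suminf_minus_truncated_unique[OF p S]) (simp only: p_norm_lam_minus_bk_sum)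
  qed (rule lp_lam_expansion[OF p x])
qed

lemma c_lam_expansion:
  assumes "x \<in> c_lam lam r s t"
  shows "(\<lambda>m. sup_norm_lam lam r s t
            (\<lambda>n. x n - lim (What lam r s t x) * bseq r s t n
               - (\<Sum>k<m. (What lam r s t x k - lim (What lam r s t x)) * bk lam r s t k n))) \<longlonglongrightarrow> 0"
proof -
  let ?l = "lim (What lam r s t x)"
  have "(\<lambda>n. What lam r s t x n - ?l) \<longlonglongrightarrow> 0"
    using assms by (simp add: c_lam_def convergent_LIMSEQ_iff LIM_zero)
  from SUP_norm_truncated_tendsto_zero[OF this] show ?thesis
    by (simp add: sup_norm_lam_def What_minus_bseq_bk_sum if_distrib[of "\<lambda>z. _ - z"] cong: if_cong)
qed

lemma c_lam_schauder_basis: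
  "schauder_basis (c_lam lam r s t) (sup_norm_lam lam r s t)
     (\<lambda>i. if i = 0 then bseq r s t else bk lam r s t (i - 1))"
  unfolding schauder_basis_def
proof (intro conjI allI ballI)
  show "(if k = 0 then bseq r s t else bk lam r s t (k - 1)) \<in> c_lam lam r s t" for k
    using delta_seq_tendsto_zero[of "k - 1"]
    by (auto simp: c_lam_def convergent_def What_bseq What_bk)
  fix x assume x: "x \<in> c_lam lam r s t"
  let ?W = "What lam r s t x" and ?l = "lim (What lam r s t x)"
  let ?N = "\<lambda>\<beta> m. sup_norm_lam lam r s t
     (\<lambda>n. x n - (\<Sum>i<m. \<beta> i * (if i = 0 then bseq r s t else bk lam r s t (i - 1)) n))"
  have l: "?W \<longlonglongrightarrow> ?l" using x by (simp add: c_lam_def convergent_LIMSEQ_iff)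
  show "\<exists>!\<beta>. ?N \<beta> \<longlonglongrightarrow> 0"
  proof (rule ex1I[of _ "\<lambda>i. if i = 0 then ?l else ?W (i - 1) - ?l"])
    have "(\<Sum>i<Suc m. (if i = 0 then ?l else ?W (i - 1) - ?l)
            * (if i = 0 then bseq r s t else bk lam r s t (i - 1)) n)
        = ?l * bseq r s t n + (\<Sum>k<m. (?W k - ?l) * bk lam r s t k n)" for m n
      by (simp only: sum.lessThan_Suc_shift) simp
    then have shift: "?N (\<lambda>i. if i = 0 then ?l else ?W (i - 1) - ?l) (Suc m)
        = sup_norm_lam lam r s t (\<lambda>n. x n - ?l * bseq r s t n
            - (\<Sum>k<m. (?W k - ?l) * bk lam r s t k n))" for m
      unfolding diff_diff_eq by presburger
    show "?N (\<lambda>i. if i = 0 then ?l else ?W (i - 1) - ?l) \<longlonglongrightarrow> 0"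
      by (rule LIMSEQ_imp_Suc) (simp only: shift c_lam_expansion[OF x])
  next
    fix \<beta> assume "?N \<beta> \<longlonglongrightarrow> 0"
    then have "(\<lambda>m. SUP n. norm (?W n - (if 0 < m then \<beta> 0 else 0)
                                - (if n + 1 < m then \<beta> (Suc n) else 0))) \<longlonglongrightarrow> 0"
      by (simp add: sup_norm_lam_def What_minus_c_basis_sum)
    from SUP_norm_minus_const_truncated_unique[OF l this]
    show "\<beta> = (\<lambda>i. if i = 0 then ?l else ?W (i - 1) - ?l)"
      by (auto simp: fun_eq_iff gr0_conv_Suc)
  qed
qed

end

theorem theorem3:
  fixes r s t :: real and lam :: "nat \<Rightarrow> real"
  assumes "r \<noteq> 0" and "s \<noteq> 0" and "t \<noteq> 0"
    and "strict_mono lam" and "\<And>k. lam k > 0" and "filterlim lam at_top sequentially"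
  shows
   "(schauder_basis (c0_lam lam r s t) (sup_norm_lam lam r s t) (bk lam r s t) \<and>
     (\<forall>x \<in> c0_lam lam r s t.
        (\<lambda>m. sup_norm_lam lam r s t
               (\<lambda>n. x n - (\<Sum>k<m. What lam r s t x k * bk lam r s t k n))) \<longlonglongrightarrow> 0))
    \<and>
    (\<forall>p::real. 1 \<le> p \<longrightarrow>
      schauder_basis (lp_lam p lam r s t) (p_norm_lam p lam r s t) (bk lam r s t) \<and>
      (\<forall>x \<in> lp_lam p lam r s t.
        (\<lambda>m. p_norm_lam p lam r s t
               (\<lambda>n. x n - (\<Sum>k<m. What lam r s t x k * bk lam r s t k n))) \<longlonglongrightarrow> 0))
    \<and>
    (schauder_basis (c_lam lam r s t) (sup_norm_lam lam r s t)
        (\<lambda>i. if i = 0 then bseq r s t else bk lam r s t (i - 1)) \<and>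
     (\<forall>x \<in> c_lam lam r s t.
        (\<lambda>m. sup_norm_lam lam r s t
               (\<lambda>n. x n - lim (What lam r s t x) * bseq r s t n
                   - (\<Sum>k<m. (What lam r s t x k - lim (What lam r s t x)) * bk lam r s t k n)))
          \<longlonglongrightarrow> 0))"
proof -
  note hyps = assms(1,4,5)
  show ?thesis
    using c0_lam_schauder_basis[OF hyps] c0_lam_expansion[OF hyps]
      lp_lam_schauder_basis[OF hyps] lp_lam_expansion[OF hyps]
      c_lam_schauder_basis[OF hyps] c_lam_expansion[OF hyps]
    by blast
qed

end
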